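(* Let $(G,\sigma)$ be a connection graph and let $f:V\to\mathbb{R}^{d\times d}$ satisfy $(\mathcal{L}f)(x)=0_{d\times d}$ for all $x\in V$. Then for any $i,j\in V$, $f(i)=\Omega^0_{ij}f(j)$.
   Context: A connection graph $(G,\sigma)$: finite connected weighted graph $G=(V,E,W)$ with $w_{ij}>0$ iff $\{i,j\}\in E$, $\deg(i)=\sum_j w_{ij}$, and $\sigma$ mapping oriented edges to $\mathsf{O}(d)$ with $\sigma_{ji}=\sigma_{ij}^{\mathrm T}$. $(\mathcal{L}f)(i)=\sum_{j\sim i}w_{ij}(f(i)-\sigma_{ij}f(j))$. Let $(X_t)_{t\ge0}$ be the simple random walk on $G$ with transition probabilities $w_{ij}/\deg(i)$, and $\mathbb{E}^i$ the expectation given $X_0=i$. For $s\in\{0,1\}$ and $j\in V$, $T^s_j=\inf\{t\ge s: X_t=j\}$. The mean path signature is $\Omega^s_{ij}=\mathbb{E}^i\big[\prod_{\ell=1}^{T^s_j}\sigma_{X_{\ell-1}X_\ell}\big]$ (ordered product, empty product $=I_d$; so $\Omega^0_{ii}=I_d$). *)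

theory Defs
  imports "HOL-Analysis.Analysis"
begin

text \<open>Vertex set V = UNIV of a finite type 'v; weights w; edge {i,j} iff w i j > 0.
  Connection sigma :: 'v => 'v => real^'d^'d (a d x d real matrix on each oriented edge).\<close>

definition deg :: "('v::finite \<Rightarrow> 'v \<Rightarrow> real) \<Rightarrow> 'v \<Rightarrow> real" where
  "deg w i = (\<Sum>j\<in>UNIV. w i j)"

definition connection_graph ::
  "('v::finite \<Rightarrow> 'v \<Rightarrow> real) \<Rightarrow> ('v \<Rightarrow> 'v \<Rightarrow> real^'d^'d) \<Rightarrow> bool" where
  "connection_graph w \<sigma> \<longleftrightarrow>
     (\<forall>i j. w i j \<ge> 0) \<and> (\<forall>i j. w i j = w j i) \<and> (\<forall>i. w i i = 0) \<and>
     (\<forall>i j. (i, j) \<in> {(a, b). w a b > 0}\<^sup>*) \<and>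
     (\<forall>i j. w i j > 0 \<longrightarrow> orthogonal_matrix (\<sigma> i j) \<and> \<sigma> j i = transpose (\<sigma> i j))"

definition conn_laplacian ::
  "('v::finite \<Rightarrow> 'v \<Rightarrow> real) \<Rightarrow> ('v \<Rightarrow> 'v \<Rightarrow> real^'d^'d) \<Rightarrow> ('v \<Rightarrow> real^'d^'d) \<Rightarrow> 'v \<Rightarrow> real^'d^'d" where
  "conn_laplacian w \<sigma> f i = (\<Sum>j\<in>{j. w i j > 0}. w i j *\<^sub>R (f i - \<sigma> i j ** f j))"

text \<open>Probability that the simple random walk started at hd xs follows the path xs
  (for its first length xs - 1 steps): product of w_{ab}/deg(a) over consecutive pairs.\<close>
fun path_prob :: "('v::finite \<Rightarrow> 'v \<Rightarrow> real) \<Rightarrow> 'v list \<Rightarrow> real" where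
  "path_prob w (a # b # xs) = (w a b / deg w a) * path_prob w (b # xs)"
| "path_prob w _ = 1"

fun path_sig :: "('v \<Rightarrow> 'v \<Rightarrow> real^'d^'d) \<Rightarrow> 'v list \<Rightarrow> real^'d^'d" where
  "path_sig \<sigma> (a # b # xs) = \<sigma> a b ** path_sig \<sigma> (b # xs)"
| "path_sig \<sigma> _ = mat 1"

text \<open>Paths (X_0,...,X_T) of the walk started at i, stopped at T = T^s_j = inf{t >= s. X_t = j}:
  nonempty lists starting at i, ending at j, of length >= s+1, not visiting j at times
  s <= t < T.\<close>
definition hit_paths :: "nat \<Rightarrow> 'v \<Rightarrow> 'v \<Rightarrow> 'v list set" where
  "hit_paths s i j = {xs. xs \<noteq> [] \<and> hd xs = i \<and> last xs = j \<and> s + 1 \<le> length xs \<and>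
      (\<forall>t. s \<le> t \<and> t < length xs - 1 \<longrightarrow> xs ! t \<noteq> j)}"

text \<open>Mean path signature Omega^s_ij = E^i[prod_{l=1}^{T^s_j} sigma_{X_{l-1} X_l}],
  the expectation written as the sum over the (countably many) possible stopped paths.\<close>
definition mean_path_sig ::
  "('v::finite \<Rightarrow> 'v \<Rightarrow> real) \<Rightarrow> ('v \<Rightarrow> 'v \<Rightarrow> real^'d^'d) \<Rightarrow> nat \<Rightarrow> 'v \<Rightarrow> 'v \<Rightarrow> real^'d^'d" where
  "mean_path_sig w \<sigma> s i j = infsum (\<lambda>xs. path_prob w xs *\<^sub>R path_sig \<sigma> xs) (hit_paths s i j)"

end

theory Submission
  imports Defs
begin

text \<open>Fix \<open>j\<close> and write \<open>\<Omega>\<^sub>k\<close> for \<open>mean_path_sig w \<sigma> 0 k j\<close> and \<open>p\<^sub>k\<^sub>l = w\<^sub>k\<^sub>l / deg k\<close>.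
  Conditioning on the first step of the walk gives \<open>\<Omega>\<^sub>k = (\<Sum>l. p\<^sub>k\<^sub>l \<sigma>\<^sub>k\<^sub>l \<Omega>\<^sub>l)\<close> for \<open>k \<noteq> j\<close>,
  and \<open>\<Omega>\<^sub>j = I\<close>; a function annihilated by the connection Laplacian satisfies the same
  mean-value identity \<open>f k = (\<Sum>l. p\<^sub>k\<^sub>l \<sigma>\<^sub>k\<^sub>l f l)\<close>. So every column \<open>u\<close> of
  \<open>f k - \<Omega>\<^sub>k f j\<close> satisfies \<open>u k = (\<Sum>l. p\<^sub>k\<^sub>l \<sigma>\<^sub>k\<^sub>l u l)\<close> off \<open>j\<close> and vanishes at \<open>j\<close>.
  As the \<open>\<sigma>\<^sub>k\<^sub>l\<close> are orthogonal, \<open>norm u\<close> is sub-mean-value off \<open>j\<close>, and by the maximum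
  principle on the connected graph it is maximal at \<open>j\<close>, where it is \<open>0\<close>.
  The series defining \<open>\<Omega>\<close> converges absolutely because hitting probabilities sum to at most
  \<open>1\<close> and products of orthogonal matrices are bounded.\<close>

lemma norm_orthogonal_matrix_vector:
  fixes Q :: "real^'n^'n"
  assumes "orthogonal_matrix Q"
  shows "norm (Q *v x) = norm x"
proof -
  have "orthogonal_transformation ((*v) Q)"
    using assms by (simp add: orthogonal_transformation_matrix)
  then show ?thesis by (simp add: orthogonal_transformation)
qed

lemma norm_orthogonal_combination_le:
  fixes Q :: "'a \<Rightarrow> real^'n^'n"
  assumes "\<forall>l\<in>S. 0 \<le> c l" and "\<forall>l\<in>S. c l \<noteq> 0 \<longrightarrow> orthogonal_matrix (Q l)"
  shows "norm (\<Sum>l\<in>S. c l *\<^sub>R (Q l *v x l)) \<le> (\<Sum>l\<in>S. c l * norm (x l))"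
proof -
  have "norm (\<Sum>l\<in>S. c l *\<^sub>R (Q l *v x l)) \<le> (\<Sum>l\<in>S. norm (c l *\<^sub>R (Q l *v x l)))"
    by (rule norm_sum)
  also have "\<dots> = (\<Sum>l\<in>S. c l * norm (x l))"
    using assms by (intro sum.cong refl) (auto simp: norm_orthogonal_matrix_vector)
  finally show ?thesis .
qed

lemma norm_orthogonal_matrix_le:
  fixes Q :: "real^'n^'n"
  assumes "orthogonal_matrix Q"
  shows "norm Q \<le> CARD('n)"
proof -
  have "norm (Q $ i) = 1" for i
    using assms by (simp add: orthogonal_matrix_orthonormal_rows row_def)
  moreover have "norm Q \<le> (\<Sum>i\<in>UNIV. norm (Q $ i))"
    by (simp add: norm_vec_def L2_set_le_sum)
  ultimately show ?thesis by simp
qed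

lemma bounded_linear_matrix_mult_left: "bounded_linear (\<lambda>X::real^'n^'m. (A::real^'m^'k) ** X)"
  unfolding linear_conv_bounded_linear[symmetric]
  by (rule linearI) (simp_all add: matrix_add_ldistrib matrix_scalar_ac scalar_matrix_assoc)

lemma matrix_mult_scaleR_right: "(A::real^'m^'k) ** (c *\<^sub>R (B::real^'n^'m)) = c *\<^sub>R (A ** B)"
  by (simp add: matrix_scalar_ac scalar_matrix_assoc)

lemma sum_matrix_vector_mult: "(\<Sum>l\<in>S. F l :: real^'n^'m) *v x = (\<Sum>l\<in>S. F l *v x)"
  by (induction S rule: infinite_finite_induct) (simp_all add: matrix_vector_mult_add_rdistrib)

lemma weighted_sum_matrix_mult_vector:
  "(\<Sum>l\<in>S. c l *\<^sub>R (A l ** (B l :: real^'n^'m))) *v x = (\<Sum>l\<in>S. c l *\<^sub>R (A l *v (B l *v x)))"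
  by (simp add: sum_matrix_vector_mult scaleR_matrix_vector_assoc matrix_vector_mul_assoc)

lemma hit_paths_hd: "xs \<in> hit_paths s i j \<Longrightarrow> xs \<noteq> [] \<and> hd xs = i"
  by (simp add: hit_paths_def)

lemma hit_paths_0_self: "hit_paths 0 j j = {[j]}"
proof (rule set_eqI, rule iffI)
  fix xs assume "xs \<in> hit_paths 0 j j"
  hence xs: "xs \<noteq> []" "hd xs = j" "\<forall>t. t < length xs - 1 \<longrightarrow> xs ! t \<noteq> j"
    by (auto simp: hit_paths_def)
  have "length xs = 1"
    using xs(3)[rule_format, of 0] xs(1,2) by (cases xs) (auto simp: hd_conv_nth)
  then show "xs \<in> {[j]}" using xs by (cases xs) auto
qed (auto simp: hit_paths_def)

lemma hit_paths_0_first_step: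
  assumes "i \<noteq> j"
  shows "hit_paths 0 i j = (\<Union>k. Cons i ` hit_paths 0 k j)"
proof (rule set_eqI, rule iffI)
  fix xs assume "xs \<in> hit_paths 0 i j"
  hence xs: "xs \<noteq> []" "hd xs = i" "last xs = j" "\<forall>t. t < length xs - 1 \<longrightarrow> xs ! t \<noteq> j"
    by (auto simp: hit_paths_def)
  then obtain ys where xs_eq: "xs = i # ys" by (cases xs) auto
  have "ys \<noteq> []" using xs(3) xs_eq assms by auto
  have "ys \<in> hit_paths 0 (hd ys) j"
    unfolding hit_paths_def
  proof (intro CollectI conjI allI impI)
    fix t assume "0 \<le> t \<and> t < length ys - 1"
    then show "ys ! t \<noteq> j" using xs(4)[rule_format, of "Suc t"] xs_eq by auto
  qed (use \<open>ys \<noteq> []\<close> xs(3) xs_eq in \<open>auto simp: Suc_le_eq\<close>)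
  then show "xs \<in> (\<Union>k. Cons i ` hit_paths 0 k j)" using xs_eq by blast
next
  fix xs assume "xs \<in> (\<Union>k. Cons i ` hit_paths 0 k j)"
  then obtain k ys where xs_eq: "xs = i # ys" and "ys \<in> hit_paths 0 k j" by blast
  hence ys: "ys \<noteq> []" "last ys = j" "\<forall>t. t < length ys - 1 \<longrightarrow> ys ! t \<noteq> j"
    by (auto simp: hit_paths_def)
  show "xs \<in> hit_paths 0 i j"
    unfolding hit_paths_def
  proof (intro CollectI conjI allI impI)
    fix t assume "0 \<le> t \<and> t < length xs - 1"
    then show "xs ! t \<noteq> j" using ys xs_eq assms by (cases t) auto
  qed (use xs_eq ys in auto)
qed

lemma Cons_image_hit_paths_disjoint:
  "k \<noteq> k' \<Longrightarrow> Cons i ` hit_paths s k j \<inter> Cons i ` hit_paths s k' j = {}"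
  by (auto simp: hit_paths_def)

lemma deg_nonneg: "\<forall>i j. 0 \<le> w i j \<Longrightarrow> 0 \<le> deg w i"
  by (simp add: deg_def sum_nonneg)

lemma deg_ge_weight: "\<forall>i j. 0 \<le> w i j \<Longrightarrow> w i k \<le> deg w i"
  unfolding deg_def by (rule member_le_sum) simp_all

lemma path_prob_Cons: "ys \<noteq> [] \<Longrightarrow> path_prob w (i # ys) = w i (hd ys) / deg w i * path_prob w ys"
  by (cases ys) auto

lemma path_sig_Cons: "ys \<noteq> [] \<Longrightarrow> path_sig \<sigma> (i # ys) = \<sigma> i (hd ys) ** path_sig \<sigma> ys"
  by (cases ys) auto

lemma weighted_path_sig_Cons:
  "ys \<noteq> [] \<Longrightarrow> path_prob w (i # ys) *\<^sub>R path_sig \<sigma> (i # ys)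
    = (w i (hd ys) / deg w i) *\<^sub>R (\<sigma> i (hd ys) ** (path_prob w ys *\<^sub>R path_sig \<sigma> ys))"
  by (simp add: path_prob_Cons path_sig_Cons matrix_mult_scaleR_right)

lemma path_prob_nonneg: "\<forall>i j. 0 \<le> w i j \<Longrightarrow> 0 \<le> path_prob w xs"
  by (induction w xs rule: path_prob.induct) (auto intro!: divide_nonneg_nonneg deg_nonneg)

lemma orthogonal_matrix_path_sig:
  assumes nonneg: "\<forall>i j. 0 \<le> w i j"
    and orth: "\<forall>a b. 0 < w a b \<longrightarrow> orthogonal_matrix (\<sigma> a b)"
    and "path_prob w xs \<noteq> 0"
  shows "orthogonal_matrix (path_sig \<sigma> xs)"
  using assms(3)
proof (induction xs rule: induct_list012)
  case (3 a b zs)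
  then have "w a b \<noteq> 0" "path_prob w (b # zs) \<noteq> 0" by auto
  with nonneg have "0 < w a b" by (simp add: order_less_le)
  then show ?case using 3(2)[OF \<open>path_prob w (b # zs) \<noteq> 0\<close>] orth
    by (simp add: orthogonal_matrix_mul)
qed (auto simp: orthogonal_matrix_id)

lemma sum_path_prob_Cons_image:
  assumes "finite A" and "\<forall>ys\<in>A. ys \<noteq> [] \<and> hd ys = k"
  shows "sum (path_prob w) (Cons i ` A) = w i k / deg w i * sum (path_prob w) A"
proof -
  have "sum (path_prob w) (Cons i ` A) = (\<Sum>ys\<in>A. path_prob w (i # ys))"
    by (simp add: sum.reindex)
  also have "\<dots> = (\<Sum>ys\<in>A. w i k / deg w i * path_prob w ys)"
    using assms(2) by (intro sum.cong) (auto simp: path_prob_Cons)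
  finally show ?thesis by (simp add: sum_distrib_left)
qed

lemma sum_path_prob_hit_paths_le_1:
  fixes w :: "'v::finite \<Rightarrow> 'v \<Rightarrow> real"
  assumes nonneg: "\<forall>i j. 0 \<le> w i j"
  shows "sum (path_prob w) {xs \<in> hit_paths 0 i j. length xs \<le> n} \<le> 1"
proof (induction n arbitrary: i)
  case 0
  have "{xs \<in> hit_paths 0 i j. length xs \<le> 0} = {}" by (auto simp: hit_paths_def)
  then show ?case by (simp only: sum.empty)
next
  case (Suc n)
  show ?case
  proof (cases "i = j")
    case True
    then have "{xs \<in> hit_paths 0 i j. length xs \<le> Suc n} = {[j]}"
      by (auto simp: hit_paths_0_self)
    then show ?thesis by simp
  next
    case False
    define B where "B k = {ys \<in> hit_paths 0 k j. length ys \<le> n}" for k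
    have fin: "finite (B k)" for k
      unfolding B_def by (rule finite_subset[OF _ finite_lists_length_le[of UNIV n]]) auto
    have "{xs \<in> hit_paths 0 i j. length xs \<le> Suc n} = (\<Union>k. Cons i ` B k)"
      unfolding hit_paths_0_first_step[OF False] B_def by (auto simp: image_iff)
    then have "sum (path_prob w) {xs \<in> hit_paths 0 i j. length xs \<le> Suc n}
        = (\<Sum>k\<in>UNIV. sum (path_prob w) (Cons i ` B k))"
      by (simp only:) (rule sum.UNION_disjoint, use fin in \<open>auto simp: B_def hit_paths_def\<close>)
    also have "\<dots> = (\<Sum>k\<in>UNIV. w i k / deg w i * sum (path_prob w) (B k))"
      using fin by (intro sum.cong refl sum_path_prob_Cons_image) (auto simp: B_def hit_paths_def)
    also have "\<dots> \<le> (\<Sum>k\<in>UNIV. w i k / deg w i)"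
      using Suc.IH nonneg deg_nonneg[OF nonneg]
      by (intro sum_mono mult_right_le_one_le) (auto simp: B_def intro: sum_nonneg path_prob_nonneg)
    also have "\<dots> \<le> 1"
      by (simp add: sum_divide_distrib[symmetric] deg_def[symmetric])
    finally show ?thesis .
  qed
qed

lemma path_prob_summable_on_hit_paths:
  fixes w :: "'v::finite \<Rightarrow> 'v \<Rightarrow> real"
  assumes nonneg: "\<forall>i j. 0 \<le> w i j"
  shows "path_prob w summable_on hit_paths 0 i j"
proof (rule nonneg_bdd_above_summable_on)
  show "0 \<le> path_prob w xs" for xs using path_prob_nonneg[OF nonneg] .
  show "bdd_above (sum (path_prob w) ` {F. F \<subseteq> hit_paths 0 i j \<and> finite F})"
  proof (rule bdd_aboveI2)
    fix F assume F: "F \<in> {F. F \<subseteq> hit_paths 0 i j \<and> finite F}"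
    then have "F \<subseteq> {xs \<in> hit_paths 0 i j. length xs \<le> Max (length ` F)}" by auto
    then have "sum (path_prob w) F
        \<le> sum (path_prob w) {xs \<in> hit_paths 0 i j. length xs \<le> Max (length ` F)}"
      by (intro sum_mono2 finite_subset[OF _ finite_lists_length_le[of UNIV]])
        (auto intro: path_prob_nonneg[OF nonneg])
    also have "\<dots> \<le> 1" by (rule sum_path_prob_hit_paths_le_1[OF nonneg])
    finally show "sum (path_prob w) F \<le> 1" .
  qed
qed

lemma path_sig_summable_on_hit_paths:
  fixes w :: "'v::finite \<Rightarrow> 'v \<Rightarrow> real" and \<sigma> :: "'v \<Rightarrow> 'v \<Rightarrow> real^'d^'d"
  assumes nonneg: "\<forall>i j. 0 \<le> w i j"
    and orth: "\<forall>a b. 0 < w a b \<longrightarrow> orthogonal_matrix (\<sigma> a b)"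
  shows "(\<lambda>xs. path_prob w xs *\<^sub>R path_sig \<sigma> xs) summable_on hit_paths 0 i j"
proof (rule abs_summable_summable, rule Infinite_Sum.abs_summable_on_comparison_test')
  show "(\<lambda>xs. CARD('d) * path_prob w xs) summable_on hit_paths 0 i j"
    by (intro summable_on_cmult_right path_prob_summable_on_hit_paths[OF nonneg])
  fix xs
  show "norm (path_prob w xs *\<^sub>R path_sig \<sigma> xs) \<le> CARD('d) * path_prob w xs"
  proof (cases "path_prob w xs = 0")
    case False
    then have "norm (path_sig \<sigma> xs) \<le> CARD('d)"
      by (intro norm_orthogonal_matrix_le orthogonal_matrix_path_sig[OF nonneg orth])
    then show ?thesis using path_prob_nonneg[OF nonneg, of xs]
      by (simp add: mult.commute mult_left_mono)
  qed simp
qed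

lemma mean_path_sig_0_self: "mean_path_sig w \<sigma> 0 j j = mat 1"
  by (simp add: mean_path_sig_def hit_paths_0_self)

lemma mean_path_sig_0_first_step:
  fixes w :: "'v::finite \<Rightarrow> 'v \<Rightarrow> real" and \<sigma> :: "'v \<Rightarrow> 'v \<Rightarrow> real^'d^'d"
  assumes nonneg: "\<forall>i j. 0 \<le> w i j"
    and orth: "\<forall>a b. 0 < w a b \<longrightarrow> orthogonal_matrix (\<sigma> a b)"
    and "i \<noteq> j"
  shows "mean_path_sig w \<sigma> 0 i j
    = (\<Sum>k\<in>UNIV. (w i k / deg w i) *\<^sub>R (\<sigma> i k ** mean_path_sig w \<sigma> 0 k j))"
proof -
  define T where "T xs = path_prob w xs *\<^sub>R path_sig \<sigma> xs" for xs
  define \<Omega> where "\<Omega> k = mean_path_sig w \<sigma> 0 k j" for k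
  have "(T has_sum (w i k / deg w i) *\<^sub>R (\<sigma> i k ** \<Omega> k)) (Cons i ` hit_paths 0 k j)" for k
  proof -
    have "(T has_sum \<Omega> k) (hit_paths 0 k j)"
      unfolding T_def \<Omega>_def mean_path_sig_def
      by (rule has_sum_infsum[OF path_sig_summable_on_hit_paths[OF nonneg orth]])
    then have "((\<lambda>ys. (w i k / deg w i) *\<^sub>R (\<sigma> i k ** T ys))
        has_sum (w i k / deg w i) *\<^sub>R (\<sigma> i k ** \<Omega> k)) (hit_paths 0 k j)"
      by (rule has_sum_bounded_linear[OF bounded_linear_compose[OF bounded_linear_scaleR_right
            bounded_linear_matrix_mult_left]])
    also have "?this \<longleftrightarrow>
        ((T \<circ> Cons i) has_sum (w i k / deg w i) *\<^sub>R (\<sigma> i k ** \<Omega> k)) (hit_paths 0 k j)"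
      by (intro has_sum_cong) (auto simp: T_def weighted_path_sig_Cons dest!: hit_paths_hd)
    finally show ?thesis by (simp add: has_sum_reindex)
  qed
  then have "(T has_sum (\<Sum>k\<in>UNIV. (w i k / deg w i) *\<^sub>R (\<sigma> i k ** \<Omega> k)))
      (\<Union>k\<in>UNIV. Cons i ` hit_paths 0 k j)"
    by (intro sum_has_sum) (simp_all add: Cons_image_hit_paths_disjoint)
  then show ?thesis
    unfolding \<Omega>_def mean_path_sig_def T_def hit_paths_0_first_step[OF \<open>i \<noteq> j\<close>] by (rule infsumI)
qed

lemma conn_laplacian_zero_mean_value:
  fixes w :: "'v::finite \<Rightarrow> 'v \<Rightarrow> real"
  assumes nonneg: "\<forall>i j. 0 \<le> w i j"
    and "conn_laplacian w \<sigma> f k = 0" and "deg w k \<noteq> 0"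
  shows "f k = (\<Sum>l\<in>UNIV. (w k l / deg w k) *\<^sub>R (\<sigma> k l ** f l))"
proof -
  have "(\<Sum>l\<in>UNIV. w k l *\<^sub>R (f k - \<sigma> k l ** f l)) = conn_laplacian w \<sigma> f k"
    unfolding conn_laplacian_def
    using nonneg by (intro sum.mono_neutral_right) (auto simp: not_less intro: antisym)
  then have mean: "deg w k *\<^sub>R f k = (\<Sum>l\<in>UNIV. w k l *\<^sub>R (\<sigma> k l ** f l))"
    using assms(2) by (simp add: deg_def scaleR_sum_left scaleR_right_diff_distrib sum_subtractf)
  have "f k = inverse (deg w k) *\<^sub>R (deg w k *\<^sub>R f k)"
    by (simp only: scaleR_scaleR left_inverse[OF assms(3)] scaleR_one)
  also have "\<dots> = (\<Sum>l\<in>UNIV. (w k l / deg w k) *\<^sub>R (\<sigma> k l ** f l))"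
    unfolding mean by (simp only: scaleR_sum_right scaleR_scaleR divide_inverse_commute)
  finally show ?thesis .
qed

lemma sub_mean_value_max_at_boundary:
  fixes g :: "'v::finite \<Rightarrow> real" and p :: "'v \<Rightarrow> 'v \<Rightarrow> real"
  assumes p_nonneg: "\<forall>k l. 0 \<le> p k l"
    and p_stochastic: "\<forall>k. k \<noteq> j \<longrightarrow> (\<Sum>l\<in>UNIV. p k l) = 1"
    and sub_mean: "\<forall>k. k \<noteq> j \<longrightarrow> g k \<le> (\<Sum>l\<in>UNIV. p k l * g l)"
    and E_pos: "\<forall>a b. (a, b) \<in> E \<longrightarrow> 0 < p a b"
    and connected: "\<forall>k. (k, j) \<in> E\<^sup>*"
  shows "g k \<le> g j"
proof -
  define M where "M = Max (range g)"
  have g_le_M: "g l \<le> M" for l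
    unfolding M_def by (intro Max_ge) auto
  have "M \<in> range g"
    unfolding M_def by (intro Max_in) auto
  then obtain k0 where "g k0 = M" by auto
  have spread: "g l = M" if "g y = M" "y \<noteq> j" "(y, l) \<in> E" for y l
  proof -
    have "(\<Sum>l\<in>UNIV. p y l * (M - g l)) = M - (\<Sum>l\<in>UNIV. p y l * g l)"
      using p_stochastic that(2)
      by (simp add: right_diff_distrib sum_subtractf sum_distrib_right[symmetric])
    also have "\<dots> \<le> 0"
      using sub_mean that(1,2) by auto
    finally have "(\<Sum>l\<in>UNIV. p y l * (M - g l)) = 0"
      using p_nonneg g_le_M by (intro antisym sum_nonneg) auto
    then have "p y l * (M - g l) = 0"
      using p_nonneg g_le_M by (subst (asm) sum_nonneg_eq_0_iff) auto
    moreover have "0 < p y l"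
      using E_pos that(3) by blast
    ultimately show ?thesis by simp
  qed
  have "g y = M \<longrightarrow> g j = M" if "(y, j) \<in> E\<^sup>*" for y
    using that
  proof (induction rule: converse_rtrancl_induct)
    case (step y z)
    then show ?case using spread by blast
  qed simp
  then have "g j = M" using connected \<open>g k0 = M\<close> by blast
  then show ?thesis using g_le_M by simp
qed

lemma connection_graph_deg_pos:
  assumes "connection_graph w \<sigma>" and "k \<noteq> j"
  shows "0 < deg w k"
proof -
  have "(k, j) \<in> {(a, b). 0 < w a b}\<^sup>*"
    using assms(1) by (simp add: connection_graph_def)
  then obtain l where "0 < w k l"
    using assms(2) by (cases rule: converse_rtranclE) auto
  moreover have "w k l \<le> deg w k"
    using assms(1) by (intro deg_ge_weight) (simp add: connection_graph_def)
  ultimately show ?thesis by linarith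
qed

lemma connection_graph_mean_value_vanishing:
  fixes w :: "'v::finite \<Rightarrow> 'v \<Rightarrow> real" and \<sigma> :: "'v \<Rightarrow> 'v \<Rightarrow> real^'d^'d"
    and u :: "'v \<Rightarrow> real^'d"
  assumes cg: "connection_graph w \<sigma>"
    and mean: "\<forall>k. k \<noteq> j \<longrightarrow> u k = (\<Sum>l\<in>UNIV. (w k l / deg w k) *\<^sub>R (\<sigma> k l *v u l))"
    and "u j = 0"
  shows "u k = 0"
proof -
  have nonneg: "\<forall>i j. 0 \<le> w i j"
    and connected: "\<forall>k. (k, j) \<in> {(a, b). 0 < w a b}\<^sup>*"
    and orth: "\<forall>a b. 0 < w a b \<longrightarrow> orthogonal_matrix (\<sigma> a b)"
    using cg unfolding connection_graph_def by blast+
  have "norm (u k) \<le> norm (u j)"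
  proof (rule sub_mean_value_max_at_boundary[where p = "\<lambda>k l. w k l / deg w k"])
    show "\<forall>k l. 0 \<le> w k l / deg w k"
      using nonneg deg_nonneg[OF nonneg] by simp
    show "\<forall>k. k \<noteq> j \<longrightarrow> (\<Sum>l\<in>UNIV. w k l / deg w k) = 1"
      using connection_graph_deg_pos[OF cg]
      by (simp add: sum_divide_distrib[symmetric] deg_def[symmetric]) (metis less_irrefl)
    show "\<forall>a b. (a, b) \<in> {(a, b). 0 < w a b} \<longrightarrow> 0 < w a b / deg w a"
      using deg_ge_weight[OF nonneg] by (auto intro!: divide_pos_pos elim: less_le_trans)
    show "\<forall>k. k \<noteq> j \<longrightarrow> norm (u k) \<le> (\<Sum>l\<in>UNIV. w k l / deg w k * norm (u l))"
    proof (intro allI impI)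
      fix k assume "k \<noteq> j"
      have "\<forall>l. w k l / deg w k \<noteq> 0 \<longrightarrow> orthogonal_matrix (\<sigma> k l)"
        using nonneg orth by (auto simp: order_le_less)
      then show "norm (u k) \<le> (\<Sum>l\<in>UNIV. w k l / deg w k * norm (u l))"
        unfolding mean[rule_format, OF \<open>k \<noteq> j\<close>]
        using nonneg deg_nonneg[OF nonneg] by (intro norm_orthogonal_combination_le) auto
    qed
  qed (use connected in simp)
  with \<open>u j = 0\<close> show ?thesis by simp
qed

lemma conn_laplacian_zero_deviation_mean_value:
  fixes w :: "'v::finite \<Rightarrow> 'v \<Rightarrow> real" and \<sigma> :: "'v \<Rightarrow> 'v \<Rightarrow> real^'d^'d"
    and f :: "'v \<Rightarrow> real^'d^'d" and v y :: "real^'d"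
  assumes cg: "connection_graph w \<sigma>" and harmonic: "\<forall>x. conn_laplacian w \<sigma> f x = 0"
    and "k \<noteq> j"
  defines "u \<equiv> \<lambda>l. f l *v v - mean_path_sig w \<sigma> 0 l j *v y"
  shows "u k = (\<Sum>l\<in>UNIV. (w k l / deg w k) *\<^sub>R (\<sigma> k l *v u l))"
proof -
  have nonneg: "\<forall>i j. 0 \<le> w i j" and orth: "\<forall>a b. 0 < w a b \<longrightarrow> orthogonal_matrix (\<sigma> a b)"
    using cg unfolding connection_graph_def by blast+
  have "deg w k \<noteq> 0"
    using connection_graph_deg_pos[OF cg \<open>k \<noteq> j\<close>] by simp
  then have "f k = (\<Sum>l\<in>UNIV. (w k l / deg w k) *\<^sub>R (\<sigma> k l ** f l))"
    by (rule conn_laplacian_zero_mean_value[OF nonneg harmonic[rule_format]])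
  then have "f k *v v = (\<Sum>l\<in>UNIV. (w k l / deg w k) *\<^sub>R (\<sigma> k l *v (f l *v v)))"
    by (simp only: weighted_sum_matrix_mult_vector)
  moreover have "mean_path_sig w \<sigma> 0 k j *v y
      = (\<Sum>l\<in>UNIV. (w k l / deg w k) *\<^sub>R (\<sigma> k l *v (mean_path_sig w \<sigma> 0 l j *v y)))"
    unfolding mean_path_sig_0_first_step[OF nonneg orth \<open>k \<noteq> j\<close>]
    by (rule weighted_sum_matrix_mult_vector)
  ultimately show ?thesis
    by (simp add: u_def sum_subtractf[symmetric] scaleR_right_diff_distrib
        matrix_vector_mult_diff_distrib)
qed

theorem proposition4p7:
  fixes w :: "'v::finite \<Rightarrow> 'v \<Rightarrow> real"
    and \<sigma> :: "'v \<Rightarrow> 'v \<Rightarrow> real^'d^'d"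
    and f :: "'v \<Rightarrow> real^'d^'d"
  assumes "connection_graph w \<sigma>"
    and "\<forall>x. conn_laplacian w \<sigma> f x = 0"
  shows "\<forall>i j. f i = mean_path_sig w \<sigma> 0 i j ** f j"
proof (intro allI)
  fix i j
  have "f i *v v = (mean_path_sig w \<sigma> 0 i j ** f j) *v v" for v
  proof -
    define u where "u k = f k *v v - mean_path_sig w \<sigma> 0 k j *v (f j *v v)" for k
    have "u i = 0"
    proof (rule connection_graph_mean_value_vanishing[OF assms(1)])
      show "\<forall>k. k \<noteq> j \<longrightarrow> u k = (\<Sum>l\<in>UNIV. (w k l / deg w k) *\<^sub>R (\<sigma> k l *v u l))"
        using conn_laplacian_zero_deviation_mean_value[OF assms] by (simp add: u_def)
      show "u j = 0"
        by (simp add: u_def mean_path_sig_0_self)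
    qed
    then show ?thesis
      by (simp add: u_def matrix_vector_mul_assoc)
  qed
  then show "f i = mean_path_sig w \<sigma> 0 i j ** f j"
    by (simp add: matrix_eq)
qed

end
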